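(* Let $D_n=A_n$, $E_n=-B_n$, $F_n=C_n$. There is a constant $C>0$, independent of $n$, such that for every $n\in\mathbb N$ and every $t\in[0,T]$: $$\max\Big\{|D_n(t)|^2,|D_n'(t)|^2,\Big|\tfrac{D_n''(t)}{\lambda_n^{1/2}}\Big|^2,\Big|\tfrac{D_n''(t)}{\lambda_n^{3/2}}\Big|^2\Big\}\le C,\qquad \max\Big\{|E_n(t)|^2,|E_n'(t)|^2,\Big|\tfrac{E_n''(t)}{\lambda_n^{1/2}}\Big|^2,\Big|\tfrac{E_n''(t)}{\lambda_n^{3/2}}\Big|^2\Big\}\le C,$$ $$\max\Big\{|\lambda_n^{1/2}F_n(t)|^2,|\lambda_nF_n(t)|^2,|\lambda_n^{1/2}F_n'(t)|^2,|F_n''(t)|^2,\Big|\tfrac{F_n''(t)}{\lambda_n^{1/2}}\Big|^2\Big\}\le C.$$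
   Context: Setting: $0<s<1$, $\Omega\subset\mathbb R^N$ bounded open with Lipschitz boundary, $T>0$, real $\alpha,b,c$ with $b>0$ and $\gamma:=\alpha-c^2/b>0$. $0<\lambda_1\le\lambda_2\le\dots\to\infty$ are the eigenvalues of the Dirichlet fractional Laplacian $(-\Delta)_D^s$ on $\Omega$ (realization of $(-\Delta)^s$ in $L^2(\Omega)$ with zero exterior condition). For each $n$, $\lambda_{n,1},\lambda_{n,2},\lambda_{n,3}$ are the roots of $z^3+\alpha z^2+b\lambda_nz+c^2\lambda_n=0$; $\lambda_{n,1}$ is real and $\lambda_{n,3}=\overline{\lambda_{n,2}}$ is non-real, all with negative real parts, and as $n\to\infty$: $\lambda_{n,1}\to-c^2/b$, $\mathrm{Re}\,\lambda_{n,2}\to-\gamma/2$, $|\mathrm{Im}\,\lambda_{n,2}|\sim\sqrt{b\lambda_n}$. $\xi_{n,1}=(\lambda_{n,1}-\lambda_{n,2})(\lambda_{n,1}-\lambda_{n,3})$, $\xi_{n,2}=(\lambda_{n,1}-\lambda_{n,2})(\lambda_{n,2}-\lambda_{n,3})$, $\xi_{n,3}=(\lambda_{n,1}-\lambda_{n,3})(\lambda_{n,2}-\lambda_{n,3})$; $A_n(t)=\frac{\lambda_{n,2}\lambda_{n,3}}{\xi_{n,1}}e^{\lambda_{n,1}t}-\frac{\lambda_{n,1}\lambda_{n,3}}{\xi_{n,2}}e^{\lambda_{n,2}t}+\frac{\lambda_{n,1}\lambda_{n,2}}{\xi_{n,3}}e^{\lambda_{n,3}t}$, $B_n(t)=-\frac{\lambda_{n,2}+\lambda_{n,3}}{\xi_{n,1}}e^{\lambda_{n,1}t}+\frac{\lambda_{n,1}+\lambda_{n,3}}{\xi_{n,2}}e^{\lambda_{n,2}t}-\frac{\lambda_{n,1}+\lambda_{n,2}}{\xi_{n,3}}e^{\lambda_{n,3}t}$,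 $C_n(t)=\frac{1}{\xi_{n,1}}e^{\lambda_{n,1}t}-\frac{1}{\xi_{n,2}}e^{\lambda_{n,2}t}+\frac{1}{\xi_{n,3}}e^{\lambda_{n,3}t}$. *)

theory Defs
  imports "HOL-Analysis.Analysis"
begin

text \<open>The functions A_n, B_n, C_n built from the three roots l1, l2, l3
  (lambda_{n,1}, lambda_{n,2}, lambda_{n,3}) of the characteristic cubic.\<close>

definition xi1 :: "complex \<Rightarrow> complex \<Rightarrow> complex \<Rightarrow> complex" where
  "xi1 a1 a2 a3 = (a1 - a2) * (a1 - a3)"
definition xi2 :: "complex \<Rightarrow> complex \<Rightarrow> complex \<Rightarrow> complex" where
  "xi2 a1 a2 a3 = (a1 - a2) * (a2 - a3)"
definition xi3 :: "complex \<Rightarrow> complex \<Rightarrow> complex \<Rightarrow> complex" where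
  "xi3 a1 a2 a3 = (a1 - a3) * (a2 - a3)"

definition Afun :: "complex \<Rightarrow> complex \<Rightarrow> complex \<Rightarrow> real \<Rightarrow> complex" where
  "Afun a1 a2 a3 t =
     a2 * a3 / xi1 a1 a2 a3 * exp (a1 * of_real t)
   - a1 * a3 / xi2 a1 a2 a3 * exp (a2 * of_real t)
   + a1 * a2 / xi3 a1 a2 a3 * exp (a3 * of_real t)"

definition Bfun :: "complex \<Rightarrow> complex \<Rightarrow> complex \<Rightarrow> real \<Rightarrow> complex" where
  "Bfun a1 a2 a3 t =
   - (a2 + a3) / xi1 a1 a2 a3 * exp (a1 * of_real t)
   + (a1 + a3) / xi2 a1 a2 a3 * exp (a2 * of_real t)
   - (a1 + a2) / xi3 a1 a2 a3 * exp (a3 * of_real t)"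

definition Cfun :: "complex \<Rightarrow> complex \<Rightarrow> complex \<Rightarrow> real \<Rightarrow> complex" where
  "Cfun a1 a2 a3 t =
     1 / xi1 a1 a2 a3 * exp (a1 * of_real t)
   - 1 / xi2 a1 a2 a3 * exp (a2 * of_real t)
   + 1 / xi3 a1 a2 a3 * exp (a3 * of_real t)"

definition d1 :: "(real \<Rightarrow> complex) \<Rightarrow> real \<Rightarrow> complex" where
  "d1 f t = vector_derivative f (at t)"
definition d2 :: "(real \<Rightarrow> complex) \<Rightarrow> real \<Rightarrow> complex" where
  "d2 f t = vector_derivative (\<lambda>s. vector_derivative f (at s)) (at t)"

end

theory Submission
  imports Defs
begin

text \<open>
  Each of A_n, -B_n, C_n is a sum c_1 e^(l_1 t) + c_2 e^(l_2 t) + c_3 e^(l_3 t) over the roots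
  l_k = lambda_{n,k}. Since the roots have nonpositive real parts, for t >= 0 its j-th derivative
  is bounded by sum_k |c_k| |l_k|^j, independently of t. This settles every fixed n, so only large
  lambda_n matter. There Vieta's formulas give |l_1| <= alpha, |l_2 + l_3| <= alpha and
  |l_2|^2 ~ b lambda_n, while the imaginary parts of the conjugate pair force
  |xi_{n,k}| >= |l_2|^2 / 2. In the coefficient sums every power of |l_2| ~ sqrt lambda_n is then
  compensated by the weights of the statement, leaving bounds in terms of alpha and b only.
\<close>

definition exp_sum3 ::
    "complex \<Rightarrow> complex \<Rightarrow> complex \<Rightarrow> complex \<Rightarrow> complex \<Rightarrow> complex \<Rightarrow> real \<Rightarrow> complex" where
  "exp_sum3 c1 c2 c3 a1 a2 a3 t =
     c1 * exp (a1 * of_real t) + c2 * exp (a2 * of_real t) + c3 * exp (a3 * of_real t)"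

lemma has_vector_derivative_exp_scaled:
  fixes a :: complex
  shows "((\<lambda>x. exp (a * of_real x)) has_vector_derivative a * exp (a * of_real t)) (at t)"
proof -
  have "((\<lambda>z. exp (a * z)) has_field_derivative exp (a * of_real t) * a) (at (of_real t))"
    by (auto intro!: derivative_eq_intros)
  from has_vector_derivative_real_field[OF this] show ?thesis
    by (simp add: mult.commute)
qed

lemma d1_exp_sum3:
  "d1 (exp_sum3 c1 c2 c3 a1 a2 a3) = exp_sum3 (c1 * a1) (c2 * a2) (c3 * a3) a1 a2 a3"
proof
  fix t
  have "(exp_sum3 c1 c2 c3 a1 a2 a3 has_vector_derivative
          exp_sum3 (c1 * a1) (c2 * a2) (c3 * a3) a1 a2 a3 t) (at t)"
    unfolding exp_sum3_def
    by (rule derivative_eq_intros has_vector_derivative_exp_scaled refl | simp add: algebra_simps)+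
  then show "d1 (exp_sum3 c1 c2 c3 a1 a2 a3) t = exp_sum3 (c1 * a1) (c2 * a2) (c3 * a3) a1 a2 a3 t"
    unfolding d1_def by (rule vector_derivative_at)
qed

lemma d2_eq_d1_d1: "d2 f = d1 (d1 f)"
  unfolding d2_def d1_def ..

lemma d2_exp_sum3:
  "d2 (exp_sum3 c1 c2 c3 a1 a2 a3) = exp_sum3 (c1 * a1\<^sup>2) (c2 * a2\<^sup>2) (c3 * a3\<^sup>2) a1 a2 a3"
  by (simp add: d2_eq_d1_d1 d1_exp_sum3 power2_eq_square mult.assoc)

lemma norm_exp_sum3_le:
  assumes "0 \<le> t" "Re a1 \<le> 0" "Re a2 \<le> 0" "Re a3 \<le> 0"
  shows "cmod (exp_sum3 c1 c2 c3 a1 a2 a3 t) \<le> cmod c1 + cmod c2 + cmod c3"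
proof -
  have exp_le: "cmod (c * exp (a * of_real t)) \<le> cmod c" if "Re a \<le> 0" for a c
    using that assms(1) by (simp add: norm_mult mult_nonpos_nonneg mult_left_le)
  show ?thesis
    unfolding exp_sum3_def
    by (rule norm_triangle_le add_mono exp_le assms)+
qed

lemma norm_exp_sum3_derivs_le:
  fixes c1 c2 c3 a1 a2 a3 :: complex
  assumes "0 \<le> t" "Re a1 \<le> 0" "Re a2 \<le> 0" "Re a3 \<le> 0"
  defines "f \<equiv> exp_sum3 c1 c2 c3 a1 a2 a3"
  shows "cmod (f t) \<le> cmod c1 + cmod c2 + cmod c3"
    and "cmod (d1 f t) \<le> cmod c1 * cmod a1 + cmod c2 * cmod a2 + cmod c3 * cmod a3"
    and "cmod (d2 f t) \<le> cmod c1 * cmod a1 ^ 2 + cmod c2 * cmod a2 ^ 2 + cmod c3 * cmod a3 ^ 2"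
  using norm_exp_sum3_le[OF assms(1-4), of c1 c2 c3]
    norm_exp_sum3_le[OF assms(1-4), of "c1 * a1" "c2 * a2" "c3 * a3"]
    norm_exp_sum3_le[OF assms(1-4), of "c1 * a1\<^sup>2" "c2 * a2\<^sup>2" "c3 * a3\<^sup>2"]
  by (simp_all add: f_def d1_exp_sum3 d2_exp_sum3 norm_mult norm_power)

lemma Afun_eq_exp_sum3:
  "Afun a1 a2 a3 = exp_sum3 (a2 * a3 / xi1 a1 a2 a3) (- (a1 * a3 / xi2 a1 a2 a3))
     (a1 * a2 / xi3 a1 a2 a3) a1 a2 a3"
  by (rule ext) (simp add: Afun_def exp_sum3_def)

lemma uminus_Bfun_eq_exp_sum3:
  "(\<lambda>t. - Bfun a1 a2 a3 t) = exp_sum3 ((a2 + a3) / xi1 a1 a2 a3) (- ((a1 + a3) / xi2 a1 a2 a3))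
     ((a1 + a2) / xi3 a1 a2 a3) a1 a2 a3"
  by (rule ext) (simp add: Bfun_def exp_sum3_def divide_simps algebra_simps)

lemma Cfun_eq_exp_sum3:
  "Cfun a1 a2 a3 = exp_sum3 (1 / xi1 a1 a2 a3) (- (1 / xi2 a1 a2 a3)) (1 / xi3 a1 a2 a3) a1 a2 a3"
  by (rule ext) (simp add: Cfun_def exp_sum3_def)

definition profile_AB :: "(real \<Rightarrow> complex) \<Rightarrow> real \<Rightarrow> real \<Rightarrow> real" where
  "profile_AB f lam t =
     max (max (cmod (f t)^2) (cmod (d1 f t)^2))
         (max (cmod (d2 f t / of_real (lam powr (1/2)))^2)
              (cmod (d2 f t / of_real (lam powr (3/2)))^2))"

definition profile_C :: "(real \<Rightarrow> complex) \<Rightarrow> real \<Rightarrow> real \<Rightarrow> real" where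
  "profile_C f lam t =
     max (max (cmod (of_real (lam powr (1/2)) * f t)^2) (cmod (of_real lam * f t)^2))
         (max (cmod (of_real (lam powr (1/2)) * d1 f t)^2)
              (max (cmod (d2 f t)^2) (cmod (d2 f t / of_real (lam powr (1/2)))^2)))"

lemma profile_AB_le:
  assumes "cmod (f t) \<le> K" "cmod (d1 f t) \<le> K"
    and "cmod (d2 f t) / lam powr (1/2) \<le> K" "cmod (d2 f t) / lam powr (3/2) \<le> K"
  shows "profile_AB f lam t \<le> K\<^sup>2"
  using assms unfolding profile_AB_def
  by (intro max.boundedI power_mono) (simp_all add: norm_divide)

lemma profile_C_le:
  assumes "0 \<le> lam"
    and "lam powr (1/2) * cmod (f t) \<le> K" "lam * cmod (f t) \<le> K"
    and "lam powr (1/2) * cmod (d1 f t) \<le> K" "cmod (d2 f t) \<le> K"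
    and "cmod (d2 f t) / lam powr (1/2) \<le> K"
  shows "profile_C f lam t \<le> K\<^sup>2"
  using assms unfolding profile_C_def
  by (intro max.boundedI power_mono) (simp_all add: norm_divide norm_mult)

lemma exp_sum3_profiles_bounded:
  fixes c1 c2 c3 a1 a2 a3 :: complex
  assumes "0 \<le> lam" "Re a1 \<le> 0" "Re a2 \<le> 0" "Re a3 \<le> 0"
  defines "f \<equiv> exp_sum3 c1 c2 c3 a1 a2 a3"
  shows "\<exists>M. \<forall>t\<in>{0..}. profile_AB f lam t \<le> M \<and> profile_C f lam t \<le> M"
proof -
  define K where "K = max (cmod c1 + cmod c2 + cmod c3)
    (max (cmod c1 * cmod a1 + cmod c2 * cmod a2 + cmod c3 * cmod a3)
         (cmod c1 * cmod a1 ^ 2 + cmod c2 * cmod a2 ^ 2 + cmod c3 * cmod a3 ^ 2))"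
  define W where "W = 1 + lam + lam powr (1/2) + 1 / lam powr (1/2) + 1 / lam powr (3/2)"
  have weights: "1 \<le> W" "lam \<le> W" "lam powr (1/2) \<le> W" "1 / lam powr (1/2) \<le> W"
      "1 / lam powr (3/2) \<le> W"
    using assms(1) by (simp_all add: W_def)
  have weighted: "w * x \<le> W * K" if "0 \<le> w" "w \<le> W" "0 \<le> x" "x \<le> K" for w x
    using that by (meson mult_mono order_trans)
  have "profile_AB f lam t \<le> (W * K)\<^sup>2 \<and> profile_C f lam t \<le> (W * K)\<^sup>2" if "0 \<le> t" for t
  proof -
    have derivs: "cmod (f t) \<le> K" "cmod (d1 f t) \<le> K" "cmod (d2 f t) \<le> K"
      using norm_exp_sum3_derivs_le[OF that assms(2-4), of c1 c2 c3, folded f_def]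
      unfolding K_def by (auto simp: le_max_iff_disj)
    have scaled: "w * cmod g \<le> W * K" if "0 \<le> w" "w \<le> W" "g \<in> {f t, d1 f t, d2 f t}" for w g
      using that derivs by (auto intro: weighted)
    have div_scaled: "cmod (d2 f t) / w \<le> W * K" if "0 \<le> 1 / w" "1 / w \<le> W" for w
      using scaled[OF that, of "d2 f t"] by simp
    show ?thesis
    proof (intro conjI profile_AB_le profile_C_le div_scaled)
      show "cmod (f t) \<le> W * K" "cmod (d1 f t) \<le> W * K" "cmod (d2 f t) \<le> W * K"
        using scaled[of 1] weights by auto
      show "lam powr (1/2) * cmod (f t) \<le> W * K" "lam * cmod (f t) \<le> W * K"
        "lam powr (1/2) * cmod (d1 f t) \<le> W * K"
        using scaled weights assms(1) by auto
    qed (use weights assms(1) in auto)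
  qed
  then show ?thesis by auto
qed

lemma roots_profiles_bounded:
  fixes l1 l2 l3 :: complex
  assumes "0 \<le> lam" "Re l1 \<le> 0" "Re l2 \<le> 0" "Re l3 \<le> 0"
  shows "\<exists>M. \<forall>t\<in>{0..}. profile_AB (Afun l1 l2 l3) lam t \<le> M
           \<and> profile_AB (\<lambda>t. - Bfun l1 l2 l3 t) lam t \<le> M \<and> profile_C (Cfun l1 l2 l3) lam t \<le> M"
proof -
  note bounded = exp_sum3_profiles_bounded[OF assms]
  obtain MA MB MC where "\<forall>t\<in>{0..}. profile_AB (Afun l1 l2 l3) lam t \<le> MA"
    "\<forall>t\<in>{0..}. profile_AB (\<lambda>t. - Bfun l1 l2 l3 t) lam t \<le> MB"
    "\<forall>t\<in>{0..}. profile_C (Cfun l1 l2 l3) lam t \<le> MC"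
    using bounded unfolding Afun_eq_exp_sum3 uminus_Bfun_eq_exp_sum3 Cfun_eq_exp_sum3 by metis
  then show ?thesis by (intro exI[of _ "max MA (max MB MC)"]) (auto simp: le_max_iff_disj)
qed

lemma cubic_vieta:
  fixes a b c x1 x2 x3 :: complex
  assumes "\<And>z. z ^ 3 + a * z\<^sup>2 + b * z + c = (z - x1) * (z - x2) * (z - x3)"
  shows "a = - (x1 + x2 + x3)" and "b = x1 * x2 + x1 * x3 + x2 * x3"
proof -
  have at_0: "c = - x1 * x2 * x3" using assms[of 0] by simp
  have at_1: "1 + a + b + c = (1 - x1) * (1 - x2) * (1 - x3)" using assms[of 1] by simp
  have at_m1: "- 1 + a - b + c = (- 1 - x1) * (- 1 - x2) * (- 1 - x3)" using assms[of "-1"] by simp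
  have "2 * a = 2 * (- (x1 + x2 + x3))"
    using at_0 at_1 at_m1 by algebra
  then show "a = - (x1 + x2 + x3)" by (metis mult_left_cancel zero_neq_numeral)
  have "2 * b = 2 * (x1 * x2 + x1 * x3 + x2 * x3)"
    using at_0 at_1 at_m1 by algebra
  then show "b = x1 * x2 + x1 * x3 + x2 * x3" by (metis mult_left_cancel zero_neq_numeral)
qed

lemma cubic_vieta_real_and_conj_pair:
  fixes a2 a1 :: real and a0 x1 x2 x3 :: complex
  assumes "\<And>z. z ^ 3 + of_real a2 * z\<^sup>2 + of_real a1 * z + a0 = (z - x1) * (z - x2) * (z - x3)"
    and "x1 \<in> \<real>" and "x3 = cnj x2"
  shows "Re x1 + 2 * Re x2 = - a2" and "2 * Re x1 * Re x2 + (cmod x2)\<^sup>2 = a1"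
proof -
  obtain r where x1: "x1 = of_real r" using assms(2) by (auto elim: Reals_cases)
  have "(of_real a2 :: complex) = - (x1 + x2 + x3)" and "(of_real a1 :: complex) = x1 * x2 + x1 * x3 + x2 * x3"
    using cubic_vieta[OF assms(1)] by blast+
  from arg_cong[OF this(1), of Re] arg_cong[OF this(2), of Re]
  show "Re x1 + 2 * Re x2 = - a2" and "2 * Re x1 * Re x2 + (cmod x2)\<^sup>2 = a1"
    using cmod_power2[of x2] by (simp_all add: x1 assms(3) power2_eq_square algebra_simps)
qed

lemma norm_xi_ge_conj_pair:
  fixes x1 x2 x3 :: complex
  assumes "x1 \<in> \<real>" and "x3 = cnj x2" and "(Re x2)\<^sup>2 \<le> (Im x2)\<^sup>2"
  shows "(cmod x2)\<^sup>2 \<le> 2 * cmod (xi1 x1 x2 x3)" and "(cmod x2)\<^sup>2 \<le> 2 * cmod (xi2 x1 x2 x3)"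
    and "(cmod x2)\<^sup>2 \<le> 2 * cmod (xi3 x1 x2 x3)"
proof -
  define q where "q = \<bar>Im x2\<bar>"
  have dist_ge: "q \<le> cmod (x1 - x2)" "q \<le> cmod (x1 - x3)" "2 * q \<le> cmod (x2 - x3)"
    using abs_Im_le_cmod[of "x1 - x2"] abs_Im_le_cmod[of "x1 - x3"] abs_Im_le_cmod[of "x2 - x3"] assms(1)
    by (simp_all add: assms(2) q_def complex_is_Real_iff)
  have "(cmod x2)\<^sup>2 \<le> 2 * (q * q)"
    using assms(3) unfolding cmod_power2 q_def abs_mult_self_eq by (simp add: power2_eq_square)
  moreover have "q * q \<le> q * (2 * q)" by (intro mult_left_mono) (auto simp: q_def)
  ultimately show "(cmod x2)\<^sup>2 \<le> 2 * cmod (xi1 x1 x2 x3)" "(cmod x2)\<^sup>2 \<le> 2 * cmod (xi2 x1 x2 x3)"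
    "(cmod x2)\<^sup>2 \<le> 2 * cmod (xi3 x1 x2 x3)"
    using mult_mono[OF dist_ge(1,2)] mult_mono[OF dist_ge(1,3)] mult_mono[OF dist_ge(2,3)]
    unfolding xi1_def xi2_def xi3_def norm_mult by (simp_all add: q_def)
qed

lemma comparable_to_sqrt:
  fixes b lam s :: real
  assumes "0 < b" "0 \<le> lam" "0 \<le> s" "s\<^sup>2 \<le> b * lam" "b * lam \<le> 2 * s\<^sup>2"
  shows "s \<le> (1 + b + 2 / b) * sqrt lam" and "sqrt lam \<le> (1 + b + 2 / b) * s"
proof -
  define \<beta> where "\<beta> = 1 + b + 2 / b"
  have "1 \<le> \<beta>" "b \<le> \<beta>" "2 / b \<le> \<beta>" using assms(1) by (simp_all add: \<beta>_def)
  moreover from this have "\<beta> \<le> \<beta>\<^sup>2" by (simp add: power2_eq_square)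
  ultimately have \<beta>: "b \<le> \<beta>\<^sup>2" "2 / b \<le> \<beta>\<^sup>2" "0 \<le> \<beta>" by linarith+
  have "b * lam \<le> \<beta>\<^sup>2 * lam" using \<beta>(1) assms(2) by (rule mult_right_mono)
  then have "s\<^sup>2 \<le> (\<beta> * sqrt lam)\<^sup>2"
    using assms(2,4) by (simp add: power_mult_distrib)
  then show "s \<le> \<beta> * sqrt lam"
    by (rule power2_le_imp_le) (use \<beta>(3) assms(2) in simp)
  have "lam \<le> 2 / b * s\<^sup>2" using assms(1,5) by (simp add: field_simps)
  also have "\<dots> \<le> \<beta>\<^sup>2 * s\<^sup>2" using \<beta>(2) by (rule mult_right_mono) simp
  finally have "(sqrt lam)\<^sup>2 \<le> (\<beta> * s)\<^sup>2" using assms(2) by (simp add: power_mult_distrib)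
  then show "sqrt lam \<le> \<beta> * s"
    by (rule power2_le_imp_le) (use \<beta>(3) assms(3) in simp)
qed

lemma divide_le_affine_bound:
  fixes T p q s w \<beta> :: real
  assumes "T \<le> p + q * s" "0 \<le> p" "0 \<le> q" "1 \<le> w" "s \<le> \<beta> * w"
  shows "T / w \<le> p + q * \<beta>"
proof -
  have "T / w \<le> (p + q * s) / w"
    using assms(1,4) by (simp add: divide_right_mono)
  also have "\<dots> = p / w + q * (s / w)"
    by (simp add: add_divide_distrib)
  also have "\<dots> \<le> p + q * \<beta>"
    using assms(2-5) by (intro add_mono mult_left_mono) (auto simp: divide_le_eq mult.commute mult_le_cancel_left1)
  finally show ?thesis .
qed

locale root_estimates =
  fixes \<alpha> \<beta> lam :: real and l1 l2 l3 :: complex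
  assumes Re_l1: "Re l1 \<le> 0" and Re_l2: "Re l2 \<le> 0" and Re_l3: "Re l3 \<le> 0"
    and norm_l1: "cmod l1 \<le> \<alpha>"
    and norm_l2_plus_l3: "cmod (l2 + l3) \<le> \<alpha>"
    and norm_l3: "cmod l3 = cmod l2"
    and one_le_norm_l2: "1 \<le> cmod l2"
    and norm_xi1: "cmod l2 ^ 2 \<le> 2 * cmod (xi1 l1 l2 l3)"
    and norm_xi2: "cmod l2 ^ 2 \<le> 2 * cmod (xi2 l1 l2 l3)"
    and norm_xi3: "cmod l2 ^ 2 \<le> 2 * cmod (xi3 l1 l2 l3)"
    and one_le_lam: "1 \<le> lam"
    and norm_l2_le: "cmod l2 \<le> \<beta> * sqrt lam"
    and sqrt_lam_le: "sqrt lam \<le> \<beta> * cmod l2"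
begin

lemma alpha_nonneg: "0 \<le> \<alpha>"
  using norm_l1 norm_ge_zero order_trans by blast

lemma one_le_sqrt_lam: "1 \<le> sqrt lam"
  using one_le_lam by simp

lemma one_le_lam_sqrt_lam: "1 \<le> lam * sqrt lam"
  using mult_mono[OF one_le_lam one_le_sqrt_lam] one_le_lam by simp

lemma lam_powr_half: "lam powr (1/2) = sqrt lam"
  using one_le_lam by (simp add: powr_half_sqrt)

lemma lam_powr_three_halves: "lam powr (3/2) = lam * sqrt lam"
  using one_le_lam by (simp add: powr_add [of lam 1 "1/2", simplified] powr_half_sqrt)

lemma beta_nonneg: "0 \<le> \<beta>"
  using sqrt_lam_le one_le_lam one_le_norm_l2 by (smt (verit) mult_nonpos_nonneg real_sqrt_ge_one)

lemma norm_l2_le_lam_sqrt_lam: "cmod l2 \<le> \<beta> * (lam * sqrt lam)"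
proof -
  have "\<beta> * sqrt lam \<le> \<beta> * (lam * sqrt lam)"
    using one_le_lam beta_nonneg by (intro mult_left_mono) (auto simp: mult_le_cancel_right1)
  then show ?thesis using norm_l2_le by linarith
qed

lemma divide_lam_powers_le:
  assumes "x \<le> p + q * cmod l2" "0 \<le> p" "0 \<le> q"
  shows "x / lam powr (1/2) \<le> p + q * \<beta>" and "x / lam powr (3/2) \<le> p + q * \<beta>"
  using divide_le_affine_bound[OF assms one_le_sqrt_lam norm_l2_le]
    divide_le_affine_bound[OF assms one_le_lam_sqrt_lam norm_l2_le_lam_sqrt_lam]
  by (simp_all add: lam_powr_half lam_powr_three_halves)

lemma norm_divide_xi_le:
  "cmod (z / xi1 l1 l2 l3) * cmod l2 ^ 2 \<le> 2 * cmod z"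
  "cmod (z / xi2 l1 l2 l3) * cmod l2 ^ 2 \<le> 2 * cmod z"
  "cmod (z / xi3 l1 l2 l3) * cmod l2 ^ 2 \<le> 2 * cmod z"
proof -
  have "cmod z / X * cmod l2 ^ 2 \<le> 2 * cmod z" if "cmod l2 ^ 2 \<le> 2 * X" for X
  proof (cases "X = 0")
    case False
    then have "0 < X" using that one_le_norm_l2 by (smt (verit) one_le_power)
    then show ?thesis
      using mult_left_mono[OF that norm_ge_zero[of z]] by (simp add: field_simps)
  qed simp
  then show "cmod (z / xi1 l1 l2 l3) * cmod l2 ^ 2 \<le> 2 * cmod z"
    "cmod (z / xi2 l1 l2 l3) * cmod l2 ^ 2 \<le> 2 * cmod z"
    "cmod (z / xi3 l1 l2 l3) * cmod l2 ^ 2 \<le> 2 * cmod z"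
    using norm_xi1 norm_xi2 norm_xi3 by (simp_all add: norm_divide)
qed

lemma norm_Afun_derivs_le:
  assumes "0 \<le> t"
  shows "cmod (Afun l1 l2 l3 t) \<le> 2 + 4 * \<alpha>"
    and "cmod (d1 (Afun l1 l2 l3) t) \<le> 6 * \<alpha>"
    and "cmod (d2 (Afun l1 l2 l3) t) \<le> 2 * \<alpha>\<^sup>2 + 4 * \<alpha> * cmod l2"
proof -
  define s where "s = cmod l2"
  define x1 where "x1 = cmod (l2 * l3 / xi1 l1 l2 l3)"
  define x2 where "x2 = cmod (l1 * l3 / xi2 l1 l2 l3)"
  define x3 where "x3 = cmod (l1 * l2 / xi3 l1 l2 l3)"
  have s: "1 \<le> s" using one_le_norm_l2 by (simp add: s_def)
  have x: "0 \<le> x1" "0 \<le> x2" "0 \<le> x3" by (simp_all add: x1_def x2_def x3_def)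
  have "x1 * s\<^sup>2 \<le> 2 * s\<^sup>2"
    using norm_divide_xi_le(1)[of "l2 * l3"] by (simp add: x1_def s_def norm_mult norm_l3 power2_eq_square)
  then have x1_le: "x1 \<le> 2" using s by simp
  have "x2 * s\<^sup>2 \<le> 2 * (cmod l1 * s)" "x3 * s\<^sup>2 \<le> 2 * (cmod l1 * s)"
    using norm_divide_xi_le(2)[of "l1 * l3"] norm_divide_xi_le(3)[of "l1 * l2"]
    by (simp_all add: x2_def x3_def s_def norm_mult norm_l3)
  then have "x2 * s \<le> 2 * cmod l1" "x3 * s \<le> 2 * cmod l1"
    using s by (simp_all add: power2_eq_square mult_le_cancel_left_pos)
  then have x23_le: "x2 * s \<le> 2 * \<alpha>" "x3 * s \<le> 2 * \<alpha>" using norm_l1 by linarith+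
  note derivs = norm_exp_sum3_derivs_le[OF assms Re_l1 Re_l2 Re_l3,
      of "l2 * l3 / xi1 l1 l2 l3" "- (l1 * l3 / xi2 l1 l2 l3)" "l1 * l2 / xi3 l1 l2 l3",
      folded Afun_eq_exp_sum3, unfolded norm_minus_cancel, folded x1_def x2_def x3_def,
      unfolded norm_l3, folded s_def]
  have "x2 \<le> x2 * s" "x3 \<le> x3 * s" using s x by (simp_all add: mult_le_cancel_left1)
  then show "cmod (Afun l1 l2 l3 t) \<le> 2 + 4 * \<alpha>"
    using derivs(1) x1_le x23_le by linarith
  have "x1 * cmod l1 \<le> 2 * \<alpha>" using x1_le x norm_l1 by (intro mult_mono) auto
  then show "cmod (d1 (Afun l1 l2 l3) t) \<le> 6 * \<alpha>"
    using derivs(2) x23_le by linarith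
  have "x1 * (cmod l1)\<^sup>2 \<le> 2 * \<alpha>\<^sup>2" using x1_le x norm_l1 by (intro mult_mono power_mono) auto
  moreover have "x2 * s\<^sup>2 \<le> 2 * \<alpha> * s" "x3 * s\<^sup>2 \<le> 2 * \<alpha> * s"
    using x23_le s by (simp_all add: power2_eq_square mult_right_mono flip: mult.assoc)
  ultimately show "cmod (d2 (Afun l1 l2 l3) t) \<le> 2 * \<alpha>\<^sup>2 + 4 * \<alpha> * cmod l2"
    using derivs(3) by (simp add: s_def)
qed

lemma norm_uminus_Bfun_derivs_le:
  assumes "0 \<le> t"
  shows "cmod (Bfun l1 l2 l3 t) \<le> 6 * \<alpha> + 4"
    and "cmod (d1 (\<lambda>t. - Bfun l1 l2 l3 t) t) \<le> 2 * \<alpha>\<^sup>2 + 4 * \<alpha> + 4"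
    and "cmod (d2 (\<lambda>t. - Bfun l1 l2 l3 t) t) \<le> 2 * \<alpha> ^ 3 + 4 * \<alpha> + 4 * cmod l2"
proof -
  define s where "s = cmod l2"
  define y1 where "y1 = cmod ((l2 + l3) / xi1 l1 l2 l3)"
  define y2 where "y2 = cmod ((l1 + l3) / xi2 l1 l2 l3)"
  define y3 where "y3 = cmod ((l1 + l2) / xi3 l1 l2 l3)"
  have s: "1 \<le> s" using one_le_norm_l2 by (simp add: s_def)
  have y: "0 \<le> y1" "0 \<le> y2" "0 \<le> y3" by (simp_all add: y1_def y2_def y3_def)
  have "y1 * s\<^sup>2 \<le> 2 * \<alpha>"
    using norm_divide_xi_le(1)[of "l2 + l3"] norm_l2_plus_l3 by (simp add: y1_def s_def)
  moreover have "y1 \<le> y1 * s\<^sup>2" using s y by (simp add: mult_le_cancel_left1 one_le_power)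
  ultimately have y1_le: "y1 \<le> 2 * \<alpha>" by linarith
  have "cmod (l1 + l3) \<le> \<alpha> + s" "cmod (l1 + l2) \<le> \<alpha> + s"
    using norm_triangle_ineq[of l1 l3] norm_triangle_ineq[of l1 l2] norm_l1 norm_l3
    by (simp_all add: s_def)
  then have y23_sq: "y2 * s\<^sup>2 \<le> 2 * \<alpha> + 2 * s" "y3 * s\<^sup>2 \<le> 2 * \<alpha> + 2 * s"
    using norm_divide_xi_le(2)[of "l1 + l3"] norm_divide_xi_le(3)[of "l1 + l2"]
    by (simp_all add: y2_def y3_def s_def)
  have "2 * \<alpha> + 2 * s \<le> (2 * \<alpha> + 2) * s"
    using s alpha_nonneg by (simp add: algebra_simps mult_le_cancel_left1)
  with y23_sq have "(y2 * s) * s \<le> (2 * \<alpha> + 2) * s" "(y3 * s) * s \<le> (2 * \<alpha> + 2) * s"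
    by (simp_all add: power2_eq_square mult.assoc)
  then have y23: "y2 * s \<le> 2 * \<alpha> + 2" "y3 * s \<le> 2 * \<alpha> + 2"
    using s by simp_all
  note derivs = norm_exp_sum3_derivs_le[OF assms Re_l1 Re_l2 Re_l3,
      of "(l2 + l3) / xi1 l1 l2 l3" "- ((l1 + l3) / xi2 l1 l2 l3)" "(l1 + l2) / xi3 l1 l2 l3",
      folded uminus_Bfun_eq_exp_sum3, unfolded norm_minus_cancel, folded y1_def y2_def y3_def,
      unfolded norm_l3, folded s_def]
  have "y2 \<le> y2 * s" "y3 \<le> y3 * s" using s y by (simp_all add: mult_le_cancel_left1)
  then show "cmod (Bfun l1 l2 l3 t) \<le> 6 * \<alpha> + 4"
    using derivs(1) y1_le y23 by linarith
  have "y1 * cmod l1 \<le> 2 * \<alpha> * \<alpha>" using y1_le y norm_l1 by (intro mult_mono) auto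
  then show "cmod (d1 (\<lambda>t. - Bfun l1 l2 l3 t) t) \<le> 2 * \<alpha>\<^sup>2 + 4 * \<alpha> + 4"
    using derivs(2) y23 by (simp add: power2_eq_square)
  have "y1 * (cmod l1)\<^sup>2 \<le> 2 * \<alpha> * \<alpha>\<^sup>2" using y1_le y norm_l1 by (intro mult_mono power_mono) auto
  then show "cmod (d2 (\<lambda>t. - Bfun l1 l2 l3 t) t) \<le> 2 * \<alpha> ^ 3 + 4 * \<alpha> + 4 * cmod l2"
    using derivs(3) y23_sq by (simp add: s_def power2_eq_square power3_eq_cube)
qed

lemma norm_Cfun_derivs_le:
  assumes "0 \<le> t"
  shows "cmod (Cfun l1 l2 l3 t) * (cmod l2)\<^sup>2 \<le> 6"
    and "cmod (d1 (Cfun l1 l2 l3) t) * cmod l2 \<le> 2 * \<alpha> + 4"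
    and "cmod (d2 (Cfun l1 l2 l3) t) \<le> 2 * \<alpha>\<^sup>2 + 4"
proof -
  define s where "s = cmod l2"
  define z1 where "z1 = cmod (1 / xi1 l1 l2 l3)"
  define z2 where "z2 = cmod (1 / xi2 l1 l2 l3)"
  define z3 where "z3 = cmod (1 / xi3 l1 l2 l3)"
  have s: "1 \<le> s" using one_le_norm_l2 by (simp add: s_def)
  have z: "0 \<le> z1" "0 \<le> z2" "0 \<le> z3" by (simp_all add: z1_def z2_def z3_def)
  have z_sq: "z1 * s\<^sup>2 \<le> 2" "z2 * s\<^sup>2 \<le> 2" "z3 * s\<^sup>2 \<le> 2"
    using norm_divide_xi_le[of 1] by (simp_all add: z1_def z2_def z3_def s_def)
  have "z1 \<le> z1 * s" using s z by (simp add: mult_le_cancel_left1)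
  moreover have "z1 * s \<le> z1 * s\<^sup>2"
    using s z by (intro mult_left_mono) (auto simp: power2_eq_square)
  ultimately have z1_le: "z1 \<le> 2" "z1 * s \<le> 2" using z_sq(1) by linarith+
  note derivs = norm_exp_sum3_derivs_le[OF assms Re_l1 Re_l2 Re_l3,
      of "1 / xi1 l1 l2 l3" "- (1 / xi2 l1 l2 l3)" "1 / xi3 l1 l2 l3",
      folded Cfun_eq_exp_sum3, unfolded norm_minus_cancel, folded z1_def z2_def z3_def,
      unfolded norm_l3, folded s_def]
  have "cmod (Cfun l1 l2 l3 t) * s\<^sup>2 \<le> (z1 + z2 + z3) * s\<^sup>2"
    using derivs(1) by (rule mult_right_mono) simp
  then show "cmod (Cfun l1 l2 l3 t) * (cmod l2)\<^sup>2 \<le> 6"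
    using z_sq by (simp add: s_def algebra_simps)
  have "z1 * s * cmod l1 \<le> 2 * \<alpha>"
    using z1_le z s norm_l1 by (intro mult_mono) auto
  moreover have "cmod (d1 (Cfun l1 l2 l3) t) * s \<le> (z1 * cmod l1 + z2 * s + z3 * s) * s"
    using derivs(2) s by (intro mult_right_mono) auto
  ultimately show "cmod (d1 (Cfun l1 l2 l3) t) * cmod l2 \<le> 2 * \<alpha> + 4"
    using z_sq by (simp add: s_def algebra_simps power2_eq_square)
  have "z1 * (cmod l1)\<^sup>2 \<le> 2 * \<alpha>\<^sup>2"
    using z1_le z norm_l1 by (intro mult_mono power_mono) auto
  then show "cmod (d2 (Cfun l1 l2 l3) t) \<le> 2 * \<alpha>\<^sup>2 + 4"
    using derivs(3) z_sq by linarith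
qed

lemma profile_AB_Afun_le:
  assumes "0 \<le> t"
  shows "profile_AB (Afun l1 l2 l3) lam t \<le> (2 + 6 * \<alpha> + 2 * \<alpha>\<^sup>2 + 4 * \<alpha> * \<beta>)\<^sup>2"
proof (rule profile_AB_le)
  note bounds = norm_Afun_derivs_le[OF assms]
  have nonneg: "0 \<le> \<alpha>" "0 \<le> \<alpha>\<^sup>2" "0 \<le> \<alpha> * \<beta>" using alpha_nonneg beta_nonneg by simp_all
  then show "cmod (Afun l1 l2 l3 t) \<le> 2 + 6 * \<alpha> + 2 * \<alpha>\<^sup>2 + 4 * \<alpha> * \<beta>"
    and "cmod (d1 (Afun l1 l2 l3) t) \<le> 2 + 6 * \<alpha> + 2 * \<alpha>\<^sup>2 + 4 * \<alpha> * \<beta>"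
    using bounds(1,2) by linarith+
  show "cmod (d2 (Afun l1 l2 l3) t) / lam powr (1/2) \<le> 2 + 6 * \<alpha> + 2 * \<alpha>\<^sup>2 + 4 * \<alpha> * \<beta>"
    and "cmod (d2 (Afun l1 l2 l3) t) / lam powr (3/2) \<le> 2 + 6 * \<alpha> + 2 * \<alpha>\<^sup>2 + 4 * \<alpha> * \<beta>"
    using divide_lam_powers_le[OF bounds(3)] nonneg by auto
qed

lemma profile_AB_uminus_Bfun_le:
  assumes "0 \<le> t"
  shows "profile_AB (\<lambda>t. - Bfun l1 l2 l3 t) lam t
           \<le> (4 + 6 * \<alpha> + 2 * \<alpha>\<^sup>2 + 2 * \<alpha> ^ 3 + 4 * \<beta>)\<^sup>2"
proof (rule profile_AB_le)
  note bounds = norm_uminus_Bfun_derivs_le[OF assms]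
  have nonneg: "0 \<le> \<alpha>" "0 \<le> \<alpha>\<^sup>2" "0 \<le> \<alpha> ^ 3" "0 \<le> \<beta>"
    using alpha_nonneg beta_nonneg by simp_all
  then show "cmod (- Bfun l1 l2 l3 t) \<le> 4 + 6 * \<alpha> + 2 * \<alpha>\<^sup>2 + 2 * \<alpha> ^ 3 + 4 * \<beta>"
    and "cmod (d1 (\<lambda>t. - Bfun l1 l2 l3 t) t) \<le> 4 + 6 * \<alpha> + 2 * \<alpha>\<^sup>2 + 2 * \<alpha> ^ 3 + 4 * \<beta>"
    using bounds(1,2) by (smt (verit) norm_minus_cancel)+
  show "cmod (d2 (\<lambda>t. - Bfun l1 l2 l3 t) t) / lam powr (1/2)
      \<le> 4 + 6 * \<alpha> + 2 * \<alpha>\<^sup>2 + 2 * \<alpha> ^ 3 + 4 * \<beta>"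
    and "cmod (d2 (\<lambda>t. - Bfun l1 l2 l3 t) t) / lam powr (3/2)
      \<le> 4 + 6 * \<alpha> + 2 * \<alpha>\<^sup>2 + 2 * \<alpha> ^ 3 + 4 * \<beta>"
    using divide_lam_powers_le[OF bounds(3)] nonneg by (smt (verit))+
qed

lemma profile_C_Cfun_le:
  assumes "0 \<le> t"
  shows "profile_C (Cfun l1 l2 l3) lam t
           \<le> (4 + 2 * \<alpha>\<^sup>2 + 2 * (\<alpha> * \<beta>) + 10 * \<beta> + 6 * \<beta>\<^sup>2)\<^sup>2"
proof (rule profile_C_le, unfold lam_powr_half)
  define s where "s = cmod l2"
  define u where "u = sqrt lam"
  note bounds = norm_Cfun_derivs_le[OF assms, folded s_def]
  have s: "1 \<le> s" and u: "1 \<le> u" "u \<le> \<beta> * s" and lam: "lam = u\<^sup>2"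
    using one_le_norm_l2 one_le_sqrt_lam sqrt_lam_le one_le_lam by (simp_all add: s_def u_def)
  have nonneg: "0 \<le> \<alpha>" "0 \<le> \<beta>" "0 \<le> \<alpha>\<^sup>2" "0 \<le> \<alpha> * \<beta>" "0 \<le> \<beta>\<^sup>2"
    using alpha_nonneg beta_nonneg by simp_all
  show "0 \<le> lam" using one_le_lam by simp
  have "u * cmod (Cfun l1 l2 l3 t) \<le> (\<beta> * s) * cmod (Cfun l1 l2 l3 t)"
    using u(2) by (rule mult_right_mono) simp
  also have "\<dots> = \<beta> * (cmod (Cfun l1 l2 l3 t) * s)" by simp
  also have "\<dots> \<le> \<beta> * (cmod (Cfun l1 l2 l3 t) * s\<^sup>2)"
    using s nonneg by (intro mult_left_mono) (auto simp: power2_eq_square)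
  also have "\<dots> \<le> \<beta> * 6" using bounds(1) nonneg by (intro mult_left_mono) auto
  finally show "sqrt lam * cmod (Cfun l1 l2 l3 t) \<le> 4 + 2 * \<alpha>\<^sup>2 + 2 * (\<alpha> * \<beta>) + 10 * \<beta> + 6 * \<beta>\<^sup>2"
    using nonneg unfolding u_def by linarith
  have "lam * cmod (Cfun l1 l2 l3 t) \<le> (\<beta> * s)\<^sup>2 * cmod (Cfun l1 l2 l3 t)"
    unfolding lam using u by (intro mult_right_mono power_mono) auto
  also have "\<dots> = \<beta>\<^sup>2 * (cmod (Cfun l1 l2 l3 t) * s\<^sup>2)" by (simp add: power_mult_distrib)
  also have "\<dots> \<le> \<beta>\<^sup>2 * 6" using bounds(1) by (intro mult_left_mono) auto
  finally show "lam * cmod (Cfun l1 l2 l3 t) \<le> 4 + 2 * \<alpha>\<^sup>2 + 2 * (\<alpha> * \<beta>) + 10 * \<beta> + 6 * \<beta>\<^sup>2"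
    using nonneg by linarith
  have "u * cmod (d1 (Cfun l1 l2 l3) t) \<le> (\<beta> * s) * cmod (d1 (Cfun l1 l2 l3) t)"
    using u(2) by (rule mult_right_mono) simp
  also have "\<dots> = \<beta> * (cmod (d1 (Cfun l1 l2 l3) t) * s)" by simp
  also have "\<dots> \<le> \<beta> * (2 * \<alpha> + 4)" using bounds(2) nonneg by (intro mult_left_mono) auto
  also have "\<dots> = 2 * (\<alpha> * \<beta>) + 4 * \<beta>" by (simp add: algebra_simps)
  finally show "sqrt lam * cmod (d1 (Cfun l1 l2 l3) t)
      \<le> 4 + 2 * \<alpha>\<^sup>2 + 2 * (\<alpha> * \<beta>) + 10 * \<beta> + 6 * \<beta>\<^sup>2"
    using nonneg unfolding u_def by linarith
  show "cmod (d2 (Cfun l1 l2 l3) t) \<le> 4 + 2 * \<alpha>\<^sup>2 + 2 * (\<alpha> * \<beta>) + 10 * \<beta> + 6 * \<beta>\<^sup>2"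
    using bounds(3) nonneg by (smt (verit))
  have "cmod (d2 (Cfun l1 l2 l3) t) / sqrt lam \<le> cmod (d2 (Cfun l1 l2 l3) t)"
    using one_le_sqrt_lam by (simp add: divide_le_eq mult_le_cancel_left1)
  then show "cmod (d2 (Cfun l1 l2 l3) t) / sqrt lam \<le> 4 + 2 * \<alpha>\<^sup>2 + 2 * (\<alpha> * \<beta>) + 10 * \<beta> + 6 * \<beta>\<^sup>2"
    using bounds(3) nonneg by (smt (verit))
qed

end

lemma root_estimates_of_cubic:
  fixes \<alpha> b lam :: real and a0 l1 l2 l3 :: complex
  assumes b: "0 < b"
    and roots: "\<And>z. z ^ 3 + of_real \<alpha> * z\<^sup>2 + of_real (b * lam) * z + a0 = (z - l1) * (z - l2) * (z - l3)"
    and l1: "l1 \<in> \<real>" and l3: "l3 = cnj l2" and neg: "Re l1 < 0" "Re l2 < 0"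
    and lam: "1 \<le> lam" "1 + 2 * \<alpha>\<^sup>2 \<le> b * lam"
  shows "root_estimates \<alpha> (1 + b + 2 / b) lam l1 l2 l3"
proof -
  define r p s where "r = Re l1" and "p = Re l2" and "s = cmod l2"
  note vieta = cubic_vieta_real_and_conj_pair[OF roots l1 l3, folded r_def p_def s_def]
  have r: "- r \<le> \<alpha>" "r < 0" and p: "- p \<le> \<alpha> / 2" "p < 0"
    using vieta(1) neg by (simp_all add: r_def p_def)
  have norm_l1: "cmod l1 \<le> \<alpha>"
    using r l1 by (simp add: r_def complex_is_Real_iff cmod_def)
  have norm_l2_plus_l3: "cmod (l2 + l3) \<le> \<alpha>"
    using p by (simp add: l3 complex_add_cnj p_def)
  have "r * p \<le> \<alpha> * (\<alpha> / 2)"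
    using mult_mono[OF r(1) p(1)] r p by simp
  then have s_sq: "b * lam - \<alpha>\<^sup>2 \<le> s\<^sup>2" "s\<^sup>2 \<le> b * lam"
    using vieta(2) mult_pos_pos[of "- r" "- p"] r p by (simp_all add: power2_eq_square)
  have "p\<^sup>2 \<le> (\<alpha> / 2)\<^sup>2" using p by (metis abs_of_neg power2_abs power_mono abs_ge_zero)
  then have "(Re l2)\<^sup>2 \<le> (Im l2)\<^sup>2"
    using s_sq lam by (simp add: s_def p_def cmod_power2 power_divide)
  note xi = norm_xi_ge_conj_pair[OF l1 l3 this]
  have "1 \<le> s\<^sup>2" using s_sq lam zero_le_power2[of \<alpha>] by linarith
  then have one_le_s: "1 \<le> s" using power2_le_imp_le[of 1 s] by (simp add: s_def)
  have "b * lam \<le> 2 * s\<^sup>2" using s_sq lam by linarith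
  note comparable = comparable_to_sqrt[OF b _ _ s_sq(2) this]
  show ?thesis
    using neg norm_l1 norm_l2_plus_l3 one_le_s xi lam comparable
    by unfold_locales (simp_all add: l3 s_def)
qed

lemma eventually_root_estimates:
  fixes \<alpha> b :: real and lam :: "nat \<Rightarrow> real" and a0 l1 l2 l3 :: "nat \<Rightarrow> complex"
  assumes "0 < b" and "filterlim lam at_top sequentially"
    and "\<And>n z. z ^ 3 + of_real \<alpha> * z\<^sup>2 + of_real (b * lam n) * z + a0 n
                 = (z - l1 n) * (z - l2 n) * (z - l3 n)"
    and "\<And>n. l1 n \<in> \<real>" and "\<And>n. l3 n = cnj (l2 n)"
    and "\<And>n. Re (l1 n) < 0" and "\<And>n. Re (l2 n) < 0"
  shows "\<forall>\<^sub>F n in sequentially. root_estimates \<alpha> (1 + b + 2 / b) (lam n) (l1 n) (l2 n) (l3 n)"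
proof -
  have "\<forall>\<^sub>F n in sequentially. max 1 ((1 + 2 * \<alpha>\<^sup>2) / b) \<le> lam n"
    using assms(2) unfolding filterlim_at_top by blast
  then show ?thesis
  proof (rule eventually_mono)
    fix n
    assume "max 1 ((1 + 2 * \<alpha>\<^sup>2) / b) \<le> lam n"
    then have "1 \<le> lam n" "1 + 2 * \<alpha>\<^sup>2 \<le> b * lam n"
      using assms(1) by (simp_all add: field_simps)
    then show "root_estimates \<alpha> (1 + b + 2 / b) (lam n) (l1 n) (l2 n) (l3 n)"
      using root_estimates_of_cubic[OF assms(1,3-7)] by blast
  qed
qed

lemma uniform_bound_from_eventual_bound:
  fixes P :: "nat \<Rightarrow> 'a \<Rightarrow> real \<Rightarrow> bool"
  assumes mono: "\<And>n x C C'. P n x C \<Longrightarrow> C \<le> C' \<Longrightarrow> P n x C'"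
    and each: "\<And>n. \<exists>M. \<forall>x\<in>S. P n x M"
    and eventually: "\<forall>\<^sub>F n in sequentially. \<forall>x\<in>S. P n x K"
  shows "\<exists>C>0. \<forall>n. \<forall>x\<in>S. P n x C"
proof -
  obtain M where M: "\<And>n x. x \<in> S \<Longrightarrow> P n x (M n)"
    using each by metis
  obtain N where N: "\<And>n x. n \<ge> N \<Longrightarrow> x \<in> S \<Longrightarrow> P n x K"
    using eventually by (auto simp: eventually_sequentially)
  define C where "C = max 1 (max K (Max (M ` {..<N})))"
  have "P n x C" if "x \<in> S" for n x
  proof (cases "n < N")
    case True
    then have "M n \<le> C" by (simp add: C_def le_max_iff_disj)
    then show ?thesis using M[OF that] mono by blast
  next
    case False
    then show ?thesis using N[OF _ that] mono[of n x K C] by (simp add: C_def)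
  qed
  moreover have "C > 0" by (simp add: C_def)
  ultimately show ?thesis by blast
qed

theorem lemma4p5:
  fixes \<alpha> b c T :: real
    and lam :: "nat \<Rightarrow> real"
    and l1 l2 l3 :: "nat \<Rightarrow> complex"
    and D E F :: "nat \<Rightarrow> real \<Rightarrow> complex"
  assumes "b > 0" and "\<alpha> - c\<^sup>2 / b > 0" and "T > 0"
    and "lam 0 > 0" and "mono lam" and "filterlim lam at_top sequentially"
    and roots: "\<And>n z. z ^ 3 + of_real \<alpha> * z\<^sup>2 + of_real (b * lam n) * z + of_real (c\<^sup>2 * lam n)
                   = (z - l1 n) * (z - l2 n) * (z - l3 n)"
    and "\<And>n. l1 n \<in> \<real>" and "\<And>n. l2 n \<notin> \<real>" and "\<And>n. l3 n = cnj (l2 n)"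
    and "\<And>n. Re (l1 n) < 0" and "\<And>n. Re (l2 n) < 0" and "\<And>n. Re (l3 n) < 0"
    and "\<And>n. D n = Afun (l1 n) (l2 n) (l3 n)"
    and "\<And>n. E n = (\<lambda>t. - Bfun (l1 n) (l2 n) (l3 n) t)"
    and "\<And>n. F n = Cfun (l1 n) (l2 n) (l3 n)"
  shows "\<exists>C>0. \<forall>n. \<forall>t\<in>{0..T}.
     max (max (cmod (D n t)^2) (cmod (d1 (D n) t)^2))
         (max (cmod (d2 (D n) t / of_real (lam n powr (1/2)))^2)
              (cmod (d2 (D n) t / of_real (lam n powr (3/2)))^2)) \<le> C
   \<and> max (max (cmod (E n t)^2) (cmod (d1 (E n) t)^2))
         (max (cmod (d2 (E n) t / of_real (lam n powr (1/2)))^2)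
              (cmod (d2 (E n) t / of_real (lam n powr (3/2)))^2)) \<le> C
   \<and> max (max (cmod (of_real (lam n powr (1/2)) * F n t)^2)
              (cmod (of_real (lam n) * F n t)^2))
         (max (cmod (of_real (lam n powr (1/2)) * d1 (F n) t)^2)
              (max (cmod (d2 (F n) t)^2)
                   (cmod (d2 (F n) t / of_real (lam n powr (1/2)))^2))) \<le> C"
proof -
  define \<beta> where "\<beta> = 1 + b + 2 / b"
  define K where "K = max ((2 + 6 * \<alpha> + 2 * \<alpha>\<^sup>2 + 4 * \<alpha> * \<beta>)\<^sup>2)
    (max ((4 + 6 * \<alpha> + 2 * \<alpha>\<^sup>2 + 2 * \<alpha> ^ 3 + 4 * \<beta>)\<^sup>2)
         ((4 + 2 * \<alpha>\<^sup>2 + 2 * (\<alpha> * \<beta>) + 10 * \<beta> + 6 * \<beta>\<^sup>2)\<^sup>2))"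
  define P where "P n t C \<longleftrightarrow> profile_AB (D n) (lam n) t \<le> C \<and> profile_AB (E n) (lam n) t \<le> C
      \<and> profile_C (F n) (lam n) t \<le> C" for n t C
  have "P n t C'" if "P n t C" "C \<le> C'" for n t C C'
    using that unfolding P_def by linarith
  moreover have "0 \<le> lam n" for n using assms(4) monoD[OF assms(5), of 0 n] by simp
  then have "\<exists>M. \<forall>t\<in>{0..T}. P n t M" for n
    using roots_profiles_bounded[of "lam n" "l1 n" "l2 n" "l3 n"] assms(11-13)
    unfolding P_def assms(14-16) by (fastforce simp: less_imp_le)
  moreover have "\<forall>\<^sub>F n in sequentially. \<forall>t\<in>{0..T}. P n t K"
    using eventually_root_estimates[OF assms(1,6) roots assms(8,10-12), folded \<beta>_def]
    unfolding P_def K_def assms(14-16)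
    by eventually_elim (auto simp: le_max_iff_disj intro: root_estimates.profile_AB_Afun_le
        root_estimates.profile_AB_uminus_Bfun_le root_estimates.profile_C_Cfun_le)
  ultimately have "\<exists>C>0. \<forall>n. \<forall>t\<in>{0..T}. P n t C"
    by (rule uniform_bound_from_eventual_bound)
  then show ?thesis unfolding P_def profile_AB_def profile_C_def .
qed

end
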